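(* Let $\psi(q)=|q|^{-\alpha}$ for $q\ne0$ with $\alpha\ge1$ and $\alpha\ne1$. Let $(P,Q)$ be a global solution of the Cucker–Smale model with velocity control described in the context, with non-collisional initial positions ($q_i^0\ne q_j^0$ for all $i\ne j$), and suppose that $(P,Q)$ exhibits flocking, i.e. $\sup_{t\ge0}\max_{i,j}|q_i(t)-q_j(t)|<\infty$ and $\lim_{t\to\infty}\max_{i,j}|p_i(t)-p_j(t)|=0$. Then \[ \inf_{t\ge0}\min_{\substack{i,j\in[N]\\ i\ne j}}|q_i(t)-q_j(t)|>0. \]
   Context: Let $N\ge1$, $d\ge1$, $\kappa>0$, $[N]=\{1,\dots,N\}$. The velocity control function $G:\mathbb R^d\to\mathbb R^d$ is $G(p)=g(|p|)\,p/|p|$ for $p\ne0$, $G(0)=0$, with $g\in C^1([0,\infty))$, $g(0)=0$, $0<m\le g'\le M$ on every compact interval (constants depending on the interval), and $g$ convex or concave on $(0,\infty)$. The model is, for $i\in[N]$, $t>0$: \[ \dot q_i=G(p_i),\qquad \dot p_i=\frac{\kappa}{N}\sum_{k=1}^N\psi(|q_k-q_i|)\big(G(p_k)-G(p_i)\big),\qquad (q_i,p_i)(0)=(q_i^0,p_i^0)\in\mathbb R^d\times\mathbb R^d. \] *)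

theory Defs
  imports "HOL-Analysis.Analysis"
begin

definition Gvc :: "(real \<Rightarrow> real) \<Rightarrow> 'a::real_normed_vector \<Rightarrow> 'a" where
  "Gvc g p = (if p = 0 then 0 else (g (norm p) / norm p) *\<^sub>R p)"

definition psi_sing :: "real \<Rightarrow> real \<Rightarrow> real" where
  "psi_sing \<alpha> r = r powr (- \<alpha>)"

text \<open>Global (classical) solution on [0,\<infinity>) of the Cucker-Smale model with velocity
  control, agents indexed by {1..N}. Since psi is singular at 0, a global solution
  is non-collisional for all t \<ge> 0 (otherwise the right-hand side is undefined).\<close>
definition cs_global_solution ::
  "nat \<Rightarrow> real \<Rightarrow> (real \<Rightarrow> real) \<Rightarrow> (real \<Rightarrow> real) \<Rightarrow>
   (nat \<Rightarrow> real \<Rightarrow> 'a::real_normed_vector) \<Rightarrow> (nat \<Rightarrow> real \<Rightarrow> 'a) \<Rightarrow> bool" where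
  "cs_global_solution N \<kappa> g \<psi> q p \<longleftrightarrow>
     (\<forall>i\<in>{1..N}. continuous_on {0..} (q i) \<and> continuous_on {0..} (p i)) \<and>
     (\<forall>t\<ge>0. \<forall>i\<in>{1..N}. \<forall>j\<in>{1..N}. i \<noteq> j \<longrightarrow> q i t \<noteq> q j t) \<and>
     (\<forall>t>0. \<forall>i\<in>{1..N}.
        (q i has_vector_derivative Gvc g (p i t)) (at t) \<and>
        (p i has_vector_derivative
           (\<kappa> / real N) *\<^sub>R (\<Sum>k\<in>{1..N}. \<psi> (norm (q k t - q i t)) *\<^sub>R (Gvc g (p k t) - Gvc g (p i t))))
          (at t))"

end

theory Submission
  imports Defs
begin

text \<open>The communication weight is bounded below by \<open>D powr (- \<alpha>)\<close> on a configuration of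
  diameter \<open>D\<close>, and \<open>G\<close> is strongly monotone and Lipschitz on bounded sets; hence the momentum
  spread \<open>\<Sum>\<^sub>i\<^sub>j |p\<^sub>i - p\<^sub>j|\<^sup>2\<close> decays exponentially and so do the velocity differences.
  Every relative position \<open>q\<^sub>i - q\<^sub>j\<close> is then Cauchy, so each pair of agents either
  collapses or stays eventually separated.  Suppose a pair collapses and let \<open>C\<close> be the
  cluster of agents collapsing onto it; it is eventually separated from the other agents.
  With \<open>S = \<Sum>\<^sub>C |q\<^sub>i - q\<^sub>j|\<^sup>2\<close> and \<open>X = \<Sum>\<^sub>C |p\<^sub>i - p\<^sub>j|\<^sup>2\<close>, the singular weight dominates
  \<open>S powr (- \<alpha> / 2)\<close> inside \<open>C\<close>, which gives
  \<open>(S powr ((1 - \<alpha>) / 2))' \<le> \<gamma> S powr (- \<alpha> / 2) sqrt X\<close> and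
  \<open>(sqrt X)' \<le> - A S powr (- \<alpha> / 2) sqrt X + B exp (- \<beta> t)\<close>.  Hence
  \<open>S powr ((1 - \<alpha>) / 2) + (\<gamma> / A) sqrt X\<close> stays bounded, and as \<open>\<alpha> > 1\<close> this keeps \<open>S\<close>
  away from \<open>0\<close>, a contradiction.  Separation at each finite time and continuity turn the
  eventual separation of every pair into a uniform one.\<close>

lemma has_real_derivative_norm_power2:
  fixes f :: "real \<Rightarrow> 'a::real_inner"
  assumes "(f has_vector_derivative f') (at t)"
  shows "((\<lambda>s. (norm (f s))\<^sup>2) has_real_derivative 2 * inner (f t) f') (at t)"
proof -
  have "((\<lambda>s. inner (f s) (f s)) has_derivative (\<lambda>h. inner (f t) (h *\<^sub>R f') + inner (h *\<^sub>R f') (f t))) (at t)"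
    using assms unfolding has_vector_derivative_def by (intro derivative_eq_intros) auto
  then have "((\<lambda>s. inner (f s) (f s)) has_real_derivative 2 * inner (f t) f') (at t)"
    unfolding has_field_derivative_def
    by (rule has_derivative_eq_rhs) (auto simp: inner_commute algebra_simps fun_eq_iff)
  then show ?thesis by (simp add: power2_norm_eq_inner)
qed

lemma norm_diff_le_by_derivative_bound:
  fixes f :: "real \<Rightarrow> 'a::real_normed_vector"
  assumes "a \<le> b"
    and f': "\<And>x. a \<le> x \<Longrightarrow> x \<le> b \<Longrightarrow> (f has_vector_derivative f' x) (at x)"
    and \<phi>': "\<And>x. a \<le> x \<Longrightarrow> x \<le> b \<Longrightarrow> (\<phi> has_real_derivative \<phi>' x) (at x)"
    and bound: "\<And>x. a \<le> x \<Longrightarrow> x \<le> b \<Longrightarrow> norm (f' x) \<le> \<phi>' x"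
  shows "norm (f b - f a) \<le> \<phi> b - \<phi> a"
proof (cases "a = b")
  case False
  then have ab: "a < b" using assms by simp
  show ?thesis
  proof (rule differentiable_bound_general[OF ab, where f' = f' and \<phi>' = \<phi>'])
    show "continuous_on {a..b} f"
      using f' by (intro continuous_at_imp_continuous_on ballI has_vector_derivative_continuous) auto
    show "continuous_on {a..b} \<phi>"
      using \<phi>' by (intro continuous_at_imp_continuous_on ballI DERIV_isCont) auto
    show "(\<phi> has_vector_derivative \<phi>' x) (at x)" if "a < x" "x < b" for x
      using \<phi>' that by (simp add: has_real_derivative_iff_has_vector_derivative)
  qed (use f' bound in auto)
qed simp

lemma exp_decay_of_deriv_le:
  fixes X X' :: "real \<Rightarrow> real"
  assumes "a \<le> t"
    and X': "\<And>s. a \<le> s \<Longrightarrow> (X has_real_derivative X' s) (at s)"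
    and le: "\<And>s. a \<le> s \<Longrightarrow> X' s \<le> - c * X s"
  shows "X t \<le> X a * exp (- c * (t - a))"
proof -
  have "X t * exp (c * t) \<le> X a * exp (c * a)"
  proof (rule DERIV_nonpos_imp_nonincreasing[OF assms(1), where f = "\<lambda>s. X s * exp (c * s)"])
    fix s assume s: "a \<le> s" "s \<le> t"
    have "((\<lambda>s. X s * exp (c * s)) has_real_derivative (X' s + c * X s) * exp (c * s)) (at s)"
      using X'[OF s(1)] by (auto intro!: derivative_eq_intros simp: algebra_simps)
    moreover have "(X' s + c * X s) * exp (c * s) \<le> 0"
      using le[OF s(1)] by (intro mult_nonpos_nonneg) auto
    ultimately show "\<exists>y. ((\<lambda>s. X s * exp (c * s)) has_real_derivative y) (at s) \<and> y \<le> 0" by blast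
  qed
  then have "X t * exp (c * t) * exp (- c * t) \<le> X a * exp (c * a) * exp (- c * t)"
    by (intro mult_right_mono) auto
  then show ?thesis by (simp add: exp_add[symmetric] algebra_simps mult_exp_exp)
qed

lemma finite_ball_ex_pos_lower:
  fixes P :: "'i \<Rightarrow> real \<Rightarrow> bool"
  assumes "finite I" and "\<And>x. x \<in> I \<Longrightarrow> \<exists>c>0. P x c"
    and "\<And>x c c'. x \<in> I \<Longrightarrow> P x c \<Longrightarrow> 0 < c' \<Longrightarrow> c' \<le> c \<Longrightarrow> P x c'"
  shows "\<exists>c>0. \<forall>x\<in>I. P x c"
  using assms
proof (induction I rule: finite_induct)
  case empty
  show ?case by (intro exI[of _ 1]) simp
next
  case (insert y I)
  then obtain c1 where c1: "0 < c1" "\<forall>x\<in>I. P x c1" by blast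
  obtain c2 where c2: "0 < c2" "P y c2" using insert.prems(1) by blast
  have "\<forall>x\<in>insert y I. P x (min c1 c2)"
    using c1 c2 insert.prems(2) by auto
  then show ?case using c1 c2 by (intro exI[of _ "min c1 c2"]) auto
qed

lemma tendsto_0_or_eventually_ge_pos:
  fixes f \<rho> :: "real \<Rightarrow> real"
  assumes f_nonneg: "\<And>t. 0 \<le> f t" and \<rho>: "(\<rho> \<longlongrightarrow> 0) at_top"
    and cauchy: "\<And>s t. s0 \<le> s \<Longrightarrow> s \<le> t \<Longrightarrow> \<bar>f t - f s\<bar> \<le> \<rho> s"
  shows "(f \<longlongrightarrow> 0) at_top \<or> (\<exists>\<delta>>0. eventually (\<lambda>t. \<delta> \<le> f t) at_top)"
proof (cases "\<exists>s\<ge>s0. 2 * \<rho> s < f s")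
  case True
  then obtain s where s: "s0 \<le> s" "2 * \<rho> s < f s" by auto
  have "0 \<le> \<rho> s" using cauchy[OF s(1) order_refl] by simp
  moreover have "eventually (\<lambda>t. f s - \<rho> s \<le> f t) at_top"
    using eventually_ge_at_top[of s] by eventually_elim (use cauchy[OF s(1)] in force)
  ultimately have "0 < f s - \<rho> s \<and> eventually (\<lambda>t. f s - \<rho> s \<le> f t) at_top"
    using s(2) by linarith
  then show ?thesis by blast
next
  case False
  have "(f \<longlongrightarrow> 0) at_top"
  proof (rule tendsto_sandwich[where f = "\<lambda>_. 0" and h = "\<lambda>s. 2 * \<rho> s"])
    show "eventually (\<lambda>t. f t \<le> 2 * \<rho> t) at_top"
      using eventually_ge_at_top[of s0] by eventually_elim (use False in force)
    show "((\<lambda>s. 2 * \<rho> s) \<longlongrightarrow> 0) at_top"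
      using tendsto_mult_right_zero[OF \<rho>] by simp
  qed (use f_nonneg in auto)
  then show ?thesis ..
qed

lemma uniform_pos_of_eventually_ge:
  fixes f :: "real \<Rightarrow> real"
  assumes cont: "continuous_on {0..} f" and pos: "\<And>t. 0 \<le> t \<Longrightarrow> 0 < f t"
    and \<delta>: "0 < \<delta>" and ev: "eventually (\<lambda>t. \<delta> \<le> f t) at_top"
  shows "\<exists>c>0. \<forall>t\<ge>0. c \<le> f t"
proof -
  obtain T0 where T0: "\<And>t. T0 \<le> t \<Longrightarrow> \<delta> \<le> f t"
    using ev unfolding eventually_at_top_linorder by blast
  define T where "T = max T0 0"
  have "continuous_on {0..T} f"
    using cont by (rule continuous_on_subset) auto
  moreover have "{0..T} \<noteq> {}" by (simp add: T_def)
  ultimately obtain t0 where t0: "t0 \<in> {0..T}" "\<And>t. t \<in> {0..T} \<Longrightarrow> f t0 \<le> f t"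
    using continuous_attains_inf[OF compact_Icc] by blast
  have "min \<delta> (f t0) \<le> f t" if "0 \<le> t" for t
  proof (cases "t \<le> T")
    case True
    then show ?thesis using t0(2)[of t] that by simp
  next
    case False
    then have "\<delta> \<le> f t" using T0[of t] by (auto simp: T_def)
    then show ?thesis by simp
  qed
  moreover have "0 < min \<delta> (f t0)" using \<delta> pos t0(1) by simp
  ultimately show ?thesis by blast
qed

lemma increment_bounds_of_deriv_bounds:
  fixes g g' :: "real \<Rightarrow> real"
  assumes g': "\<And>x. x \<ge> 0 \<Longrightarrow> (g has_real_derivative g' x) (at x within {0..})"
    and bounds: "\<And>x. x \<in> {0..R} \<Longrightarrow> m \<le> g' x \<and> g' x \<le> M"
    and ab: "0 \<le> a" "a \<le> b" "b \<le> R"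
  shows "m * (b - a) \<le> g b - g a \<and> g b - g a \<le> M * (b - a)"
proof (cases "a = b")
  case False
  then have "a < b" using ab by simp
  obtain \<xi> where \<xi>: "a < \<xi>" "\<xi> < b" "g b - g a = g' \<xi> * (b - a)"
  proof (rule mvt[OF \<open>a < b\<close>, where f' = "\<lambda>x h. g' x * h"])
    have "continuous_on {0..} g"
      by (rule DERIV_continuous_on) (use g' in auto)
    then show "continuous_on {a..b} g"
      by (rule continuous_on_subset) (use ab in auto)
    fix x assume x: "a < x" "x < b"
    have "(g has_real_derivative g' x) (at x within {0<..})"
      using ab x by (intro DERIV_subset[OF g']) auto
    then show "(g has_derivative (\<lambda>h. g' x * h)) (at x)"
      using ab x at_within_open[of x "{0<..}"] by (simp add: has_field_derivative_def)
  qed auto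
  then show ?thesis
    using bounds[of \<xi>] ab by (auto intro: mult_right_mono)
qed simp

lemma double_sum_antisym_eq_0:
  fixes f :: "'i \<Rightarrow> 'i \<Rightarrow> 'b::real_vector"
  assumes "\<And>i k. i \<in> A \<Longrightarrow> k \<in> A \<Longrightarrow> f k i = - f i k"
  shows "(\<Sum>i\<in>A. \<Sum>k\<in>A. f i k) = 0"
proof -
  define S where "S = (\<Sum>i\<in>A. \<Sum>k\<in>A. f i k)"
  have "S = (\<Sum>k\<in>A. \<Sum>i\<in>A. f i k)" unfolding S_def by (rule sum.swap)
  also have "\<dots> = (\<Sum>k\<in>A. \<Sum>i\<in>A. - f k i)"
    by (intro sum.cong refl) (rule assms; assumption)
  also have "\<dots> = - S" unfolding S_def by (simp only: sum_negf)
  finally have "S + S = - S + S" by (rule arg_cong)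
  then have "2 *\<^sub>R S = 0" by (simp only: scaleR_2 left_minus)
  then show ?thesis unfolding S_def by simp
qed

lemma double_sum_inner_diff_diff:
  fixes P F :: "'i \<Rightarrow> 'a::real_inner"
  shows "(\<Sum>i\<in>C. \<Sum>j\<in>C. inner (P i - P j) (F i - F j)) = 2 * (\<Sum>i\<in>C. \<Sum>j\<in>C. inner (P i - P j) (F i))"
proof -
  have "(\<Sum>i\<in>C. \<Sum>j\<in>C. inner (P i - P j) (F j)) = (\<Sum>j\<in>C. \<Sum>i\<in>C. inner (P i - P j) (F j))"
    by (rule sum.swap)
  also have "\<dots> = - (\<Sum>i\<in>C. \<Sum>j\<in>C. inner (P i - P j) (F i))"
    by (simp add: sum_negf[symmetric] inner_diff_left)
  finally show ?thesis
    by (simp add: inner_diff_right sum_subtractf)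
qed

lemma double_sum_inner_alignment:
  fixes P U :: "'i \<Rightarrow> 'a::real_inner" and w :: "'i \<Rightarrow> 'i \<Rightarrow> real"
  assumes sym: "\<And>i k. i \<in> C \<Longrightarrow> k \<in> C \<Longrightarrow> w k i = w i k"
  shows "(\<Sum>i\<in>C. \<Sum>j\<in>C. inner (P i - P j) (\<Sum>k\<in>C. w i k *\<^sub>R (U k - U i)))
       = - (real (card C) / 2) * (\<Sum>i\<in>C. \<Sum>k\<in>C. w i k * inner (P i - P k) (U i - U k))"
proof -
  define S where "S = (\<Sum>i\<in>C. \<Sum>k\<in>C. w i k * inner (P i) (U k - U i))"
  have Z: "(\<Sum>i\<in>C. \<Sum>k\<in>C. w i k *\<^sub>R (U k - U i)) = 0"
    by (rule double_sum_antisym_eq_0) (auto simp: sym algebra_simps)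
  have "(\<Sum>i\<in>C. \<Sum>j\<in>C. inner (P i - P j) (\<Sum>k\<in>C. w i k *\<^sub>R (U k - U i)))
      = (\<Sum>i\<in>C. \<Sum>j\<in>C. inner (P i) (\<Sum>k\<in>C. w i k *\<^sub>R (U k - U i)))
        - (\<Sum>i\<in>C. \<Sum>j\<in>C. inner (P j) (\<Sum>k\<in>C. w i k *\<^sub>R (U k - U i)))"
    by (simp add: inner_diff_left sum_subtractf)
  also have "(\<Sum>i\<in>C. \<Sum>j\<in>C. inner (P i) (\<Sum>k\<in>C. w i k *\<^sub>R (U k - U i))) = real (card C) * S"
    unfolding S_def by (simp add: inner_sum_right sum_distrib_left)
  also have "(\<Sum>i\<in>C. \<Sum>j\<in>C. inner (P j) (\<Sum>k\<in>C. w i k *\<^sub>R (U k - U i))) = 0"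
    by (subst sum.swap) (simp add: inner_sum_right[symmetric] Z)
  finally have L: "(\<Sum>i\<in>C. \<Sum>j\<in>C. inner (P i - P j) (\<Sum>k\<in>C. w i k *\<^sub>R (U k - U i))) = real (card C) * S"
    by simp
  have "S = (\<Sum>i\<in>C. \<Sum>k\<in>C. w i k * inner (P k) (U i - U k))"
    unfolding S_def by (subst sum.swap) (auto intro!: sum.cong simp: sym)
  then have "2 * S = (\<Sum>i\<in>C. \<Sum>k\<in>C. w i k * inner (P i) (U k - U i))
                   + (\<Sum>i\<in>C. \<Sum>k\<in>C. w i k * inner (P k) (U i - U k))"
    by (simp add: S_def)
  also have "\<dots> = - (\<Sum>i\<in>C. \<Sum>k\<in>C. w i k * inner (P i - P k) (U i - U k))"
    by (simp add: sum.distrib[symmetric] sum_negf[symmetric] inner_diff algebra_simps)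
  finally have "S = - (1/2) * (\<Sum>i\<in>C. \<Sum>k\<in>C. w i k * inner (P i - P k) (U i - U k))"
    by simp
  then show ?thesis using L by simp
qed

lemma norm_diff_le_sqrt_double_sum:
  fixes f :: "'i \<Rightarrow> 'a::real_normed_vector"
  assumes "finite C" "i \<in> C" "j \<in> C"
  shows "norm (f i - f j) \<le> sqrt (\<Sum>i\<in>C. \<Sum>j\<in>C. (norm (f i - f j))\<^sup>2)"
proof -
  have "(norm (f i - f j))\<^sup>2 \<le> (\<Sum>j\<in>C. (norm (f i - f j))\<^sup>2)"
    by (rule member_le_sum) (use assms in auto)
  also have "\<dots> \<le> (\<Sum>i\<in>C. \<Sum>j\<in>C. (norm (f i - f j))\<^sup>2)"
    by (rule member_le_sum[where f = "\<lambda>i. \<Sum>j\<in>C. (norm (f i - f j))\<^sup>2"])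
       (use assms in \<open>auto intro: sum_nonneg\<close>)
  finally show ?thesis by (rule real_le_rsqrt)
qed

lemma sqrt_add_power2_le:
  assumes "0 \<le> x" "0 \<le> e"
  shows "sqrt (x + e\<^sup>2) \<le> sqrt x + e"
proof -
  have "x + e\<^sup>2 \<le> (sqrt x + e)\<^sup>2"
    using assms by (simp add: power2_sum)
  then have "sqrt (x + e\<^sup>2) \<le> sqrt ((sqrt x + e)\<^sup>2)"
    by (rule real_sqrt_le_mono)
  then show ?thesis using assms by simp
qed

lemma sqrt_minus_le_div_sqrt_add_power2:
  assumes x: "0 \<le> x" and e: "0 < e"
  shows "sqrt x - e \<le> x / sqrt (x + e\<^sup>2)"
proof (cases "sqrt x \<le> e")
  case True
  then show ?thesis using x by (simp add: order_trans[OF _ divide_nonneg_nonneg])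
next
  case False
  have W: "0 < sqrt (x + e\<^sup>2)" using x e by (simp add: add_nonneg_pos)
  have "(sqrt x - e) * sqrt (x + e\<^sup>2) \<le> (sqrt x - e) * (sqrt x + e)"
    using False sqrt_add_power2_le[of x e] x e by (intro mult_left_mono) auto
  also have "\<dots> \<le> x" using x by (simp add: algebra_simps)
  finally show ?thesis using W by (simp add: pos_le_divide_eq)
qed

lemma Gvc_eq_scaleR: "Gvc g x = (g (norm x) / norm x) *\<^sub>R x"
  by (simp add: Gvc_def)

lemma Gvc_minus_scaleR: "Gvc (\<lambda>r. g r - c * r) x = Gvc g x - c *\<^sub>R x"
  by (cases "x = 0") (simp_all add: Gvc_def diff_divide_distrib scaleR_diff_left)

lemma Gvc_monotone:
  fixes x y :: "'a::real_inner"
  assumes f0: "f 0 = 0" and mono: "mono_on {0..R} f"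
    and x: "norm x \<le> R" and y: "norm y \<le> R"
  shows "0 \<le> inner (Gvc f x - Gvc f y) (x - y)"
proof -
  define a b where "a = norm x" and "b = norm y"
  define hx hy where "hx = f a / a" and "hy = f b / b"
  have ab: "a \<in> {0..R}" "b \<in> {0..R}" using x y by (auto simp: a_def b_def)
  have fa: "hx * a = f a" and fb: "hy * b = f b"
    using f0 by (auto simp: hx_def hy_def)
  have "0 \<le> f a" "0 \<le> f b"
    using mono_onD[OF mono, of 0] ab f0 by auto
  then have "0 \<le> hx + hy" using ab by (simp add: hx_def hy_def)
  then have "(hx + hy) * inner x y \<le> (hx + hy) * (a * b)"
    using norm_cauchy_schwarz[of x y] by (intro mult_left_mono) (auto simp: a_def b_def)
  moreover have "inner (Gvc f x - Gvc f y) (x - y) = hx * a\<^sup>2 + hy * b\<^sup>2 - (hx + hy) * inner x y"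
    by (simp add: Gvc_eq_scaleR hx_def hy_def a_def b_def inner_diff inner_commute
        power2_norm_eq_inner algebra_simps)
  moreover have "hx * a\<^sup>2 + hy * b\<^sup>2 - (hx + hy) * (a * b) = (a - b) * (f a - f b)"
    by (simp add: fa[symmetric] fb[symmetric] power2_eq_square algebra_simps)
  moreover have "0 \<le> (a - b) * (f a - f b)"
    using mono_onD[OF mono] ab by (cases "a \<le> b") (auto intro: mult_nonpos_nonpos mult_nonneg_nonneg)
  ultimately show ?thesis by linarith
qed

lemma Gvc_lipschitz:
  fixes x y :: "'a::real_inner"
  assumes h0: "h 0 = 0" and L: "0 \<le> L"
    and lip: "\<And>a b. a \<in> {0..R} \<Longrightarrow> b \<in> {0..R} \<Longrightarrow> \<bar>h a - h b\<bar> \<le> L * \<bar>a - b\<bar>"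
    and x: "norm x \<le> R" and y: "norm y \<le> R"
  shows "norm (Gvc h x - Gvc h y) \<le> L * norm (x - y)"
proof -
  define a b where "a = norm x" and "b = norm y"
  define hx hy where "hx = h a / a" and "hy = h b / b"
  define s where "s = inner x y"
  have ab: "a \<in> {0..R}" "b \<in> {0..R}" using x y by (auto simp: a_def b_def)
  have ha: "hx * a = h a" and hb: "hy * b = h b"
    using h0 by (auto simp: hx_def hy_def)
  have "\<bar>hx\<bar> \<le> L" "\<bar>hy\<bar> \<le> L"
    using lip[of a 0] lip[of b 0] ab h0 L by (auto simp: hx_def hy_def abs_div divide_le_eq)
  then have "\<bar>hx\<bar> * \<bar>hy\<bar> \<le> L * L" by (intro mult_mono) auto
  then have "hx * hy \<le> L\<^sup>2"
    using abs_ge_self[of "hx * hy"] by (simp add: abs_mult power2_eq_square)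
  then have i1: "(L\<^sup>2 - hx * hy) * s \<le> (L\<^sup>2 - hx * hy) * (a * b)"
    using norm_cauchy_schwarz[of x y] by (intro mult_left_mono) (auto simp: s_def a_def b_def)
  have xx: "inner x x = a\<^sup>2" and yy: "inner y y = b\<^sup>2"
    by (simp_all add: a_def b_def power2_norm_eq_inner)
  have "(norm (x - y))\<^sup>2 = a\<^sup>2 + b\<^sup>2 - 2 * s"
    by (simp add: power2_norm_eq_inner inner_diff xx yy s_def inner_commute)
  then have P: "(L * norm (x - y))\<^sup>2 = L\<^sup>2 * (a\<^sup>2 + b\<^sup>2 - 2 * s)"
    by (simp only: power_mult_distrib)
  have G: "(norm (Gvc h x - Gvc h y))\<^sup>2 = hx\<^sup>2 * a\<^sup>2 + hy\<^sup>2 * b\<^sup>2 - 2 * hx * hy * s"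
    unfolding power2_norm_eq_inner
    by (simp add: Gvc_eq_scaleR hx_def[symmetric] hy_def[symmetric] a_def[symmetric] b_def[symmetric]
        inner_diff xx[unfolded power2_eq_square] yy[unfolded power2_eq_square] s_def inner_commute
        algebra_simps power2_eq_square)
  have i2: "(L * norm (x - y))\<^sup>2 - (norm (Gvc h x - Gvc h y))\<^sup>2
      = L\<^sup>2 * a\<^sup>2 - hx\<^sup>2 * a\<^sup>2 + L\<^sup>2 * b\<^sup>2 - hy\<^sup>2 * b\<^sup>2 - 2 * (L\<^sup>2 - hx * hy) * s"
    unfolding P G by algebra
  have i3: "L\<^sup>2 * a\<^sup>2 - hx\<^sup>2 * a\<^sup>2 + L\<^sup>2 * b\<^sup>2 - hy\<^sup>2 * b\<^sup>2 - 2 * (L\<^sup>2 - hx * hy) * (a * b)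
      = (L * (a - b))\<^sup>2 - (h a - h b)\<^sup>2"
    unfolding ha[symmetric] hb[symmetric] by algebra
  have "\<bar>h a - h b\<bar> \<le> \<bar>L * (a - b)\<bar>"
    using lip[OF ab] L by (simp add: abs_mult)
  then have "(h a - h b)\<^sup>2 \<le> (L * (a - b))\<^sup>2"
    by (simp add: abs_le_square_iff)
  then have "(norm (Gvc h x - Gvc h y))\<^sup>2 \<le> (L * norm (x - y))\<^sup>2"
    using i1 i2 i3 by linarith
  then show ?thesis by (rule power2_le_imp_le) (use L in simp)
qed

lemma psi_sing_antimono:
  assumes "0 \<le> \<alpha>" "0 < r" "r \<le> s"
  shows "psi_sing \<alpha> s \<le> psi_sing \<alpha> r"
  unfolding psi_sing_def using assms by (intro powr_mono2') auto

locale cs_solution =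
  fixes N :: nat and \<kappa> :: real and g \<psi> :: "real \<Rightarrow> real"
    and q p :: "nat \<Rightarrow> real \<Rightarrow> 'a::real_inner"
  assumes solution: "cs_global_solution N \<kappa> g \<psi> q p"
begin

definition vel :: "nat \<Rightarrow> real \<Rightarrow> 'a" where
  "vel i t = Gvc g (p i t)"

definition force :: "nat \<Rightarrow> real \<Rightarrow> 'a" where
  "force i t = (\<kappa> / real N) *\<^sub>R (\<Sum>k\<in>{1..N}. \<psi> (norm (q k t - q i t)) *\<^sub>R (vel k t - vel i t))"

definition p_var :: "nat set \<Rightarrow> real \<Rightarrow> real" where
  "p_var C t = (\<Sum>i\<in>C. \<Sum>j\<in>C. (norm (p i t - p j t))\<^sup>2)"

definition q_var :: "nat set \<Rightarrow> real \<Rightarrow> real" where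
  "q_var C t = (\<Sum>i\<in>C. \<Sum>j\<in>C. (norm (q i t - q j t))\<^sup>2)"

lemma q_has_derivative: "0 < t \<Longrightarrow> i \<in> {1..N} \<Longrightarrow> (q i has_vector_derivative vel i t) (at t)"
  using solution unfolding cs_global_solution_def vel_def by blast

lemma p_has_derivative: "0 < t \<Longrightarrow> i \<in> {1..N} \<Longrightarrow> (p i has_vector_derivative force i t) (at t)"
  using solution unfolding cs_global_solution_def vel_def force_def by blast

lemma q_continuous: "i \<in> {1..N} \<Longrightarrow> continuous_on {0..} (q i)"
  using solution unfolding cs_global_solution_def by blast

lemma p_continuous: "i \<in> {1..N} \<Longrightarrow> continuous_on {0..} (p i)"
  using solution unfolding cs_global_solution_def by blast

lemma q_noncollision: "0 \<le> t \<Longrightarrow> i \<in> {1..N} \<Longrightarrow> j \<in> {1..N} \<Longrightarrow> i \<noteq> j \<Longrightarrow> q i t \<noteq> q j t"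
  using solution unfolding cs_global_solution_def by blast

lemma sum_force_eq_0: "(\<Sum>i\<in>{1..N}. force i t) = 0"
proof -
  have "(\<Sum>i\<in>{1..N}. \<Sum>k\<in>{1..N}. \<psi> (norm (q k t - q i t)) *\<^sub>R (vel k t - vel i t)) = 0"
    by (rule double_sum_antisym_eq_0) (simp add: norm_minus_commute algebra_simps)
  then show ?thesis unfolding force_def by (simp add: scaleR_sum_right[symmetric])
qed

lemma sum_p_eq:
  assumes "0 < s" "s \<le> t"
  shows "(\<Sum>i\<in>{1..N}. p i t) = (\<Sum>i\<in>{1..N}. p i s)"
proof -
  have "norm ((\<Sum>i\<in>{1..N}. p i t) - (\<Sum>i\<in>{1..N}. p i s)) \<le> (\<lambda>_. 0) t - (\<lambda>_. 0) s"
  proof (rule norm_diff_le_by_derivative_bound[OF assms(2), where f' = "\<lambda>x. \<Sum>i\<in>{1..N}. force i x"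
        and \<phi>' = "\<lambda>_. 0"])
    fix x assume "s \<le> x" "x \<le> t"
    then show "((\<lambda>x. \<Sum>i\<in>{1..N}. p i x) has_vector_derivative (\<Sum>i\<in>{1..N}. force i x)) (at x)"
      using assms by (intro has_vector_derivative_sum p_has_derivative) auto
  qed (use sum_force_eq_0 in simp_all)
  then show ?thesis by simp
qed

lemma p_var_has_derivative:
  assumes "C \<subseteq> {1..N}" "0 < t"
  shows "(p_var C has_real_derivative
           (\<Sum>i\<in>C. \<Sum>j\<in>C. 2 * inner (p i t - p j t) (force i t - force j t))) (at t)"
  unfolding p_var_def[abs_def]
  by (intro DERIV_sum has_real_derivative_norm_power2 has_vector_derivative_diff p_has_derivative)
     (use assms in auto)

lemma q_var_has_derivative:
  assumes "C \<subseteq> {1..N}" "0 < t"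
  shows "(q_var C has_real_derivative
           (\<Sum>i\<in>C. \<Sum>j\<in>C. 2 * inner (q i t - q j t) (vel i t - vel j t))) (at t)"
  unfolding q_var_def[abs_def]
  by (intro DERIV_sum has_real_derivative_norm_power2 has_vector_derivative_diff q_has_derivative)
     (use assms in auto)

lemma p_var_nonneg: "0 \<le> p_var C t"
  unfolding p_var_def by (intro sum_nonneg) auto

lemma q_var_nonneg: "0 \<le> q_var C t"
  unfolding q_var_def by (intro sum_nonneg) auto

lemma norm_p_diff_le_sqrt_p_var: "finite C \<Longrightarrow> i \<in> C \<Longrightarrow> j \<in> C \<Longrightarrow> norm (p i t - p j t) \<le> sqrt (p_var C t)"
  unfolding p_var_def by (rule norm_diff_le_sqrt_double_sum)

lemma norm_q_diff_le_sqrt_q_var: "finite C \<Longrightarrow> i \<in> C \<Longrightarrow> j \<in> C \<Longrightarrow> norm (q i t - q j t) \<le> sqrt (q_var C t)"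
  unfolding q_var_def by (rule norm_diff_le_sqrt_double_sum)

lemma norm_p_diff_le_Max:
  assumes "i \<in> {1..N}" "j \<in> {1..N}"
  shows "norm (p i t - p j t) \<le> Max {norm (p i t - p j t) | i j. i \<in> {1..N} \<and> j \<in> {1..N}}"
proof (rule Max_ge)
  have "{norm (p i t - p j t) | i j. i \<in> {1..N} \<and> j \<in> {1..N}}
        = (\<lambda>(i, j). norm (p i t - p j t)) ` ({1..N} \<times> {1..N})" by force
  then show "finite {norm (p i t - p j t) | i j. i \<in> {1..N} \<and> j \<in> {1..N}}" by simp
qed (use assms in blast)

text \<open>Momentum is conserved and flocking makes all momenta eventually close to
  their mean; before that, continuity on a compact interval bounds them.\<close>
lemma p_bounded:
  assumes N: "1 \<le> N"
    and flock_p: "((\<lambda>t. Max {norm (p i t - p j t) | i j. i \<in> {1..N} \<and> j \<in> {1..N}}) \<longlongrightarrow> 0) at_top"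
  obtains R where "\<And>i t. i \<in> {1..N} \<Longrightarrow> 0 \<le> t \<Longrightarrow> norm (p i t) \<le> R"
proof -
  obtain T0 where "\<And>t. T0 \<le> t \<Longrightarrow> Max {norm (p i t - p j t) | i j. i \<in> {1..N} \<and> j \<in> {1..N}} < 1"
    using order_tendstoD(2)[OF flock_p, of 1] unfolding eventually_at_top_linorder by auto
  then have T0: "norm (p i t - p j t) \<le> 1" if "T0 \<le> t" "i \<in> {1..N}" "j \<in> {1..N}" for t i j
    using norm_p_diff_le_Max[OF that(2,3), of t] that(1) by fastforce
  define T where "T = max T0 1"
  have "compact (\<Union>i\<in>{1..N}. p i ` {0..T})"
    by (intro compact_UN compact_continuous_image continuous_on_subset[OF p_continuous]) auto
  then obtain B where "\<forall>x\<in>(\<Union>i\<in>{1..N}. p i ` {0..T}). norm x \<le> B"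
    using compact_imp_bounded bounded_iff by metis
  then have B: "norm (p i t) \<le> B" if "i \<in> {1..N}" "t \<in> {0..T}" for i t
    using that by blast
  define P0 where "P0 = (\<Sum>j\<in>{1..N}. p j T)"
  have late: "norm (p i t) \<le> norm P0 / real N + 1" if i: "i \<in> {1..N}" and t: "T \<le> t" for i t
  proof -
    have "real N *\<^sub>R p i t = (\<Sum>j\<in>{1..N}. p j t) + (\<Sum>j\<in>{1..N}. p i t - p j t)"
      by (simp add: sum_subtractf sum_constant_scaleR)
    also have "(\<Sum>j\<in>{1..N}. p j t) = P0"
      unfolding P0_def using t by (intro sum_p_eq) (auto simp: T_def)
    finally have "norm (real N *\<^sub>R p i t) \<le> norm P0 + norm (\<Sum>j\<in>{1..N}. p i t - p j t)"
      by (metis norm_triangle_ineq)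
    also have "norm (\<Sum>j\<in>{1..N}. p i t - p j t) \<le> (\<Sum>j\<in>{1..N}. norm (p i t - p j t))"
      by (rule norm_sum)
    also have "\<dots> \<le> (\<Sum>j\<in>{1..N}. 1)"
      using T0 i t by (intro sum_mono) (simp add: T_def)
    finally show ?thesis using N by (simp add: field_simps)
  qed
  show ?thesis
  proof (rule that[of "max B (norm P0 / real N + 1)"])
    fix i and t :: real assume "i \<in> {1..N}" "0 \<le> t"
    then show "norm (p i t) \<le> max B (norm P0 / real N + 1)"
      using B[of i t] late[of i t] by (cases "t \<le> T") auto
  qed
qed

end

locale cs_flocking = cs_solution N \<kappa> g "psi_sing \<alpha>" q p
  for N :: nat and \<kappa> \<alpha> :: real and g :: "real \<Rightarrow> real" and q p :: "nat \<Rightarrow> real \<Rightarrow> 'a::real_inner" +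
  fixes R m M D :: real
  assumes N: "1 \<le> N" and kappa: "0 < \<kappa>" and alpha: "1 < \<alpha>" and g0: "g 0 = 0"
    and R: "0 < R" and m: "0 < m"
    and g_increment: "\<And>a b. 0 \<le> a \<Longrightarrow> a \<le> b \<Longrightarrow> b \<le> R \<Longrightarrow> m * (b - a) \<le> g b - g a \<and> g b - g a \<le> M * (b - a)"
    and p_bound: "\<And>i t. i \<in> {1..N} \<Longrightarrow> 0 \<le> t \<Longrightarrow> norm (p i t) \<le> R"
    and D: "0 < D"
    and q_diam: "\<And>i j t. i \<in> {1..N} \<Longrightarrow> j \<in> {1..N} \<Longrightarrow> 0 \<le> t \<Longrightarrow> norm (q i t - q j t) \<le> D"
begin

lemma m_le_M: "m \<le> M"
proof -
  have "m * R \<le> g R - g 0" "g R - g 0 \<le> M * R" using g_increment[of 0 R] R by simp_all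
  then have "m * R \<le> M * R" by linarith
  then show ?thesis using R by (rule mult_right_le_imp_le)
qed

lemma vel_strongly_monotone:
  assumes "i \<in> {1..N}" "k \<in> {1..N}" "0 \<le> t"
  shows "m * (norm (p i t - p k t))\<^sup>2 \<le> inner (p i t - p k t) (vel i t - vel k t)"
proof -
  let ?f = "\<lambda>r. g r - m * r"
  have "mono_on {0..R} ?f"
    by (intro mono_onI) (use g_increment in \<open>force simp: algebra_simps\<close>)
  then have "0 \<le> inner (Gvc ?f (p i t) - Gvc ?f (p k t)) (p i t - p k t)"
    using g0 p_bound assms by (intro Gvc_monotone) auto
  also have "Gvc ?f (p i t) - Gvc ?f (p k t) = (vel i t - vel k t) - m *\<^sub>R (p i t - p k t)"
    by (simp only: Gvc_minus_scaleR vel_def) (simp add: algebra_simps)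
  finally have "0 \<le> inner (vel i t - vel k t) (p i t - p k t) - m * inner (p i t - p k t) (p i t - p k t)"
    by (simp only: inner_diff_left inner_scaleR_left)
  then show ?thesis
    by (simp add: inner_commute power2_norm_eq_inner)
qed

lemma vel_lipschitz:
  assumes "i \<in> {1..N}" "k \<in> {1..N}" "0 \<le> t"
  shows "norm (vel i t - vel k t) \<le> M * norm (p i t - p k t)"
  unfolding vel_def
proof (rule Gvc_lipschitz[where R = R])
  show "0 \<le> M" using m m_le_M by simp
  have ordered: "\<bar>g a - g b\<bar> \<le> M * \<bar>a - b\<bar>" if "0 \<le> a" "a \<le> b" "b \<le> R" for a b
  proof -
    have "0 \<le> m * (b - a)" using m that by simp
    then have "\<bar>g a - g b\<bar> = g b - g a" using g_increment[OF that] by simp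
    moreover have "\<bar>a - b\<bar> = b - a" using that by simp
    ultimately show ?thesis using g_increment[OF that] by simp
  qed
  show "\<bar>g a - g b\<bar> \<le> M * \<bar>a - b\<bar>" if "a \<in> {0..R}" "b \<in> {0..R}" for a b
    using ordered[of a b] ordered[of b a] that by (cases "a \<le> b") (auto simp: abs_minus_commute)
qed (use g0 p_bound assms in auto)

definition ext_force :: "nat set \<Rightarrow> nat \<Rightarrow> real \<Rightarrow> 'a" where
  "ext_force C i t = (\<kappa> / real N) *\<^sub>R (\<Sum>k\<in>{1..N} - C. psi_sing \<alpha> (norm (q k t - q i t)) *\<^sub>R (vel k t - vel i t))"

lemma force_split:
  assumes "C \<subseteq> {1..N}"
  shows "force i t = (\<kappa> / real N) *\<^sub>R (\<Sum>k\<in>C. psi_sing \<alpha> (norm (q k t - q i t)) *\<^sub>R (vel k t - vel i t))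
                     + ext_force C i t"
proof -
  have "(\<Sum>k\<in>{1..N}. psi_sing \<alpha> (norm (q k t - q i t)) *\<^sub>R (vel k t - vel i t))
      = (\<Sum>k\<in>{1..N} - C. psi_sing \<alpha> (norm (q k t - q i t)) *\<^sub>R (vel k t - vel i t))
        + (\<Sum>k\<in>C. psi_sing \<alpha> (norm (q k t - q i t)) *\<^sub>R (vel k t - vel i t))"
    by (rule sum.subset_diff[OF assms]) simp
  then show ?thesis unfolding force_def ext_force_def by (simp add: scaleR_add_right)
qed

lemma alignment_dissipation:
  assumes C: "C \<subseteq> {1..N}" and t: "0 \<le> t" and w: "0 \<le> w"
    and w_le: "\<And>i k. i \<in> C \<Longrightarrow> k \<in> C \<Longrightarrow> i \<noteq> k \<Longrightarrow> w \<le> psi_sing \<alpha> (norm (q k t - q i t))"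
  shows "(\<Sum>i\<in>C. \<Sum>j\<in>C. inner (p i t - p j t)
           (\<Sum>k\<in>C. psi_sing \<alpha> (norm (q k t - q i t)) *\<^sub>R (vel k t - vel i t)))
         \<le> - (real (card C) / 2) * (w * m * p_var C t)"
proof -
  define \<phi> where "\<phi> i k = psi_sing \<alpha> (norm (q k t - q i t))" for i k
  have "w * m * p_var C t = (\<Sum>i\<in>C. \<Sum>k\<in>C. w * (m * (norm (p i t - p k t))\<^sup>2))"
    unfolding p_var_def by (simp add: sum_distrib_left mult.assoc)
  also have "\<dots> \<le> (\<Sum>i\<in>C. \<Sum>k\<in>C. \<phi> i k * inner (p i t - p k t) (vel i t - vel k t))"
  proof (intro sum_mono)
    fix i k assume ik: "i \<in> C" "k \<in> C"
    show "w * (m * (norm (p i t - p k t))\<^sup>2) \<le> \<phi> i k * inner (p i t - p k t) (vel i t - vel k t)"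
    proof (cases "i = k")
      case False
      have "m * (norm (p i t - p k t))\<^sup>2 \<le> inner (p i t - p k t) (vel i t - vel k t)"
        using ik C t by (intro vel_strongly_monotone) auto
      moreover have "0 \<le> m * (norm (p i t - p k t))\<^sup>2" using m by simp
      ultimately show ?thesis
        using w_le[OF ik False] w unfolding \<phi>_def by (meson mult_mono order_trans)
    qed simp
  qed
  finally have diss: "w * m * p_var C t \<le> (\<Sum>i\<in>C. \<Sum>k\<in>C. \<phi> i k * inner (p i t - p k t) (vel i t - vel k t))" .
  have "(\<Sum>i\<in>C. \<Sum>j\<in>C. inner (p i t - p j t) (\<Sum>k\<in>C. \<phi> i k *\<^sub>R (vel k t - vel i t)))
      = - (real (card C) / 2) * (\<Sum>i\<in>C. \<Sum>k\<in>C. \<phi> i k * inner (p i t - p k t) (vel i t - vel k t))"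
    by (rule double_sum_inner_alignment) (simp add: \<phi>_def norm_minus_commute)
  also have "\<dots> \<le> - (real (card C) / 2) * (w * m * p_var C t)"
    using mult_left_mono[OF diss, of "real (card C)"] by simp
  finally show ?thesis unfolding \<phi>_def .
qed

lemma ext_force_contribution_le:
  assumes C: "finite C" and e: "\<And>i. i \<in> C \<Longrightarrow> norm (ext_force C i t) \<le> e"
  shows "(\<Sum>i\<in>C. \<Sum>j\<in>C. inner (p i t - p j t) (ext_force C i t)) \<le> (real (card C))\<^sup>2 * e * sqrt (p_var C t)"
proof -
  have "(\<Sum>i\<in>C. \<Sum>j\<in>C. inner (p i t - p j t) (ext_force C i t)) \<le> (\<Sum>i\<in>C. \<Sum>j\<in>C. sqrt (p_var C t) * e)"
  proof (intro sum_mono)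
    fix i j assume ij: "i \<in> C" "j \<in> C"
    have "inner (p i t - p j t) (ext_force C i t) \<le> norm (p i t - p j t) * norm (ext_force C i t)"
      by (rule norm_cauchy_schwarz)
    also have "\<dots> \<le> sqrt (p_var C t) * e"
      by (intro mult_mono norm_p_diff_le_sqrt_p_var C ij e) (auto simp: p_var_nonneg)
    finally show "inner (p i t - p j t) (ext_force C i t) \<le> sqrt (p_var C t) * e" .
  qed
  then show ?thesis by (simp add: power2_eq_square algebra_simps)
qed

lemma p_var_deriv_le:
  assumes C: "C \<subseteq> {1..N}" and t: "0 \<le> t" and w: "0 \<le> w"
    and w_le: "\<And>i k. i \<in> C \<Longrightarrow> k \<in> C \<Longrightarrow> i \<noteq> k \<Longrightarrow> w \<le> psi_sing \<alpha> (norm (q k t - q i t))"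
    and e: "\<And>i. i \<in> C \<Longrightarrow> norm (ext_force C i t) \<le> e"
  shows "(\<Sum>i\<in>C. \<Sum>j\<in>C. 2 * inner (p i t - p j t) (force i t - force j t))
     \<le> - (2 * \<kappa> * real (card C) * m / real N) * w * p_var C t
       + 4 * (real (card C))\<^sup>2 * e * sqrt (p_var C t)"
proof -
  have fin: "finite C" using C finite_subset by blast
  define In where "In i = (\<Sum>k\<in>C. psi_sing \<alpha> (norm (q k t - q i t)) *\<^sub>R (vel k t - vel i t))" for i
  define I E where "I = (\<Sum>i\<in>C. \<Sum>j\<in>C. inner (p i t - p j t) (In i))"
    and "E = (\<Sum>i\<in>C. \<Sum>j\<in>C. inner (p i t - p j t) (ext_force C i t))"
  have "(\<Sum>i\<in>C. \<Sum>j\<in>C. 2 * inner (p i t - p j t) (force i t - force j t))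
      = 2 * (\<Sum>i\<in>C. \<Sum>j\<in>C. inner (p i t - p j t) (force i t - force j t))"
    by (simp add: sum_distrib_left)
  also have "\<dots> = 4 * (\<Sum>i\<in>C. \<Sum>j\<in>C. inner (p i t - p j t) (force i t))"
    by (simp add: double_sum_inner_diff_diff)
  also have "(\<Sum>i\<in>C. \<Sum>j\<in>C. inner (p i t - p j t) (force i t)) = (\<kappa> / real N) * I + E"
    unfolding force_split[OF C] I_def E_def In_def
    by (simp add: inner_add_right sum.distrib sum_distrib_left)
  finally have eq: "(\<Sum>i\<in>C. \<Sum>j\<in>C. 2 * inner (p i t - p j t) (force i t - force j t))
      = 4 * ((\<kappa> / real N) * I + E)" .
  have "I \<le> - (real (card C) / 2) * (w * m * p_var C t)"
    unfolding I_def In_def by (rule alignment_dissipation[OF C t w w_le])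
  then have I_le: "(\<kappa> / real N) * I \<le> (\<kappa> / real N) * (- (real (card C) / 2) * (w * m * p_var C t))"
    using kappa by (intro mult_left_mono) auto
  have E_le: "E \<le> (real (card C))\<^sup>2 * e * sqrt (p_var C t)"
    unfolding E_def by (rule ext_force_contribution_le[OF fin e])
  have "4 * ((\<kappa> / real N) * I + E)
      \<le> 4 * ((\<kappa> / real N) * (- (real (card C) / 2) * (w * m * p_var C t))
        + (real (card C))\<^sup>2 * e * sqrt (p_var C t))"
    by (rule mult_left_mono[OF add_mono[OF I_le E_le]]) simp
  also have "\<dots> = - (2 * \<kappa> * real (card C) * m / real N) * w * p_var C t
       + 4 * (real (card C))\<^sup>2 * e * sqrt (p_var C t)"
    using N by (simp add: field_simps)
  finally show ?thesis unfolding eq .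
qed

lemma p_var_deriv_le_all:
  assumes "0 < t"
  shows "(\<Sum>i\<in>{1..N}. \<Sum>j\<in>{1..N}. 2 * inner (p i t - p j t) (force i t - force j t))
     \<le> - (2 * \<kappa> * m * D powr (- \<alpha>)) * p_var {1..N} t"
proof -
  have "D powr (- \<alpha>) \<le> psi_sing \<alpha> (norm (q k t - q i t))"
    if "i \<in> {1..N}" "k \<in> {1..N}" "i \<noteq> k" for i k
    unfolding psi_sing_def[of _ D, symmetric]
    using q_noncollision[of t k i] q_diam[of k i t] that assms alpha by (intro psi_sing_antimono) auto
  then have "(\<Sum>i\<in>{1..N}. \<Sum>j\<in>{1..N}. 2 * inner (p i t - p j t) (force i t - force j t))
     \<le> - (2 * \<kappa> * real (card {1..N}) * m / real N) * D powr (- \<alpha>) * p_var {1..N} t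
       + 4 * (real (card {1..N}))\<^sup>2 * 0 * sqrt (p_var {1..N} t)"
    using assms by (intro p_var_deriv_le) (auto simp: ext_force_def)
  then show ?thesis using N by simp
qed

lemma vel_diff_exp_decay:
  obtains K \<beta> where "0 \<le> K" "0 < \<beta>"
    "\<And>t i k. 1 \<le> t \<Longrightarrow> i \<in> {1..N} \<Longrightarrow> k \<in> {1..N} \<Longrightarrow> norm (vel i t - vel k t) \<le> K * exp (- \<beta> * t)"
proof
  define \<beta> where "\<beta> = \<kappa> * m * D powr (- \<alpha>)"
  show "0 < \<beta>" unfolding \<beta>_def using kappa m D by simp
  show "0 \<le> M * sqrt (p_var {1..N} 1) * exp \<beta>"
    using m m_le_M p_var_nonneg by simp
  fix t :: real and i k assume t: "1 \<le> t" and ik: "i \<in> {1..N}" "k \<in> {1..N}"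
  have "p_var {1..N} t \<le> p_var {1..N} 1 * exp (- (2 * \<beta>) * (t - 1))"
    unfolding \<beta>_def
    by (rule exp_decay_of_deriv_le[OF t, where X' = "\<lambda>s. \<Sum>i\<in>{1..N}. \<Sum>j\<in>{1..N}.
          2 * inner (p i s - p j s) (force i s - force j s)"])
       (use p_var_has_derivative p_var_deriv_le_all in \<open>auto simp: mult.assoc\<close>)
  also have "exp (- (2 * \<beta>) * (t - 1)) = (exp \<beta> * exp (- \<beta> * t))\<^sup>2"
    by (simp add: power2_eq_square exp_add[symmetric] algebra_simps)
  finally have "sqrt (p_var {1..N} t) \<le> sqrt (p_var {1..N} 1 * (exp \<beta> * exp (- \<beta> * t))\<^sup>2)"
    by (rule real_sqrt_le_mono)
  also have "\<dots> = sqrt (p_var {1..N} 1) * exp \<beta> * exp (- \<beta> * t)"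
    by (simp add: real_sqrt_mult)
  finally have decay: "sqrt (p_var {1..N} t) \<le> sqrt (p_var {1..N} 1) * exp \<beta> * exp (- \<beta> * t)" .
  have M: "0 \<le> M" using m m_le_M by simp
  have "norm (vel i t - vel k t) \<le> M * norm (p i t - p k t)"
    using ik t by (intro vel_lipschitz) auto
  also have "\<dots> \<le> M * sqrt (p_var {1..N} t)"
    using M ik by (intro mult_left_mono norm_p_diff_le_sqrt_p_var) auto
  also have "\<dots> \<le> M * (sqrt (p_var {1..N} 1) * exp \<beta> * exp (- \<beta> * t))"
    using M decay by (rule mult_left_mono[rotated])
  finally show "norm (vel i t - vel k t) \<le> M * sqrt (p_var {1..N} 1) * exp \<beta> * exp (- \<beta> * t)"
    by (simp add: mult.assoc)
qed

lemma rel_pos_tendsto_0_or_separated: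
  assumes ij: "i \<in> {1..N}" "j \<in> {1..N}"
  shows "((\<lambda>t. q i t - q j t) \<longlongrightarrow> 0) at_top \<or> (\<exists>\<delta>>0. eventually (\<lambda>t. \<delta> \<le> norm (q i t - q j t)) at_top)"
proof -
  obtain K \<beta> where K: "0 \<le> K" and \<beta>: "0 < \<beta>"
    and decay: "\<And>t. 1 \<le> t \<Longrightarrow> norm (vel i t - vel j t) \<le> K * exp (- \<beta> * t)"
    using vel_diff_exp_decay ij by metis
  define \<rho> where "\<rho> s = K / \<beta> * exp (- \<beta> * s)" for s
  have "norm ((q i t - q j t) - (q i s - q j s)) \<le> \<rho> s" if s: "1 \<le> s" "s \<le> t" for s t
  proof -
    have "norm ((q i t - q j t) - (q i s - q j s)) \<le> - \<rho> t - - \<rho> s"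
    proof (rule norm_diff_le_by_derivative_bound[OF s(2), where f' = "\<lambda>x. vel i x - vel j x"
          and \<phi>' = "\<lambda>x. K * exp (- \<beta> * x)"])
      fix x assume "s \<le> x" "x \<le> t"
      then show "((\<lambda>x. q i x - q j x) has_vector_derivative vel i x - vel j x) (at x)"
        and "((\<lambda>x. - \<rho> x) has_real_derivative K * exp (- \<beta> * x)) (at x)"
        and "norm (vel i x - vel j x) \<le> K * exp (- \<beta> * x)"
        using s ij \<beta> decay unfolding \<rho>_def
        by (auto intro!: has_vector_derivative_diff q_has_derivative derivative_eq_intros)
    qed
    moreover have "0 \<le> \<rho> t" unfolding \<rho>_def using K \<beta> by simp
    ultimately show ?thesis by linarith
  qed
  then have cauchy: "\<bar>norm (q i t - q j t) - norm (q i s - q j s)\<bar> \<le> \<rho> s" if "1 \<le> s" "s \<le> t" for s t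
    using that norm_triangle_ineq3 order_trans by blast
  have "(\<rho> \<longlongrightarrow> 0) at_top"
  proof -
    have "filterlim (\<lambda>s. - \<beta> * s) at_bot at_top"
      using \<beta> by (intro filterlim_tendsto_neg_mult_at_bot[OF tendsto_const] filterlim_ident) auto
    then have "((\<lambda>s. exp (- \<beta> * s)) \<longlongrightarrow> 0) at_top"
      by (rule filterlim_compose[OF exp_at_bot])
    then show ?thesis unfolding \<rho>_def[abs_def] by (rule tendsto_mult_right_zero)
  qed
  from tendsto_0_or_eventually_ge_pos[OF norm_ge_zero this cauchy]
  show ?thesis by (simp add: tendsto_norm_zero_iff)
qed

end

locale cs_cluster = cs_flocking +
  fixes C :: "nat set" and \<delta> T K \<beta> :: real
  assumes C: "C \<subseteq> {1..N}" and C_nontrivial: "\<exists>i\<in>C. \<exists>j\<in>C. i \<noteq> j"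
    and \<delta>: "0 < \<delta>" and T: "0 < T" and K: "0 \<le> K" and \<beta>: "0 < \<beta>"
    and vel_decay: "\<And>t i k. T \<le> t \<Longrightarrow> i \<in> {1..N} \<Longrightarrow> k \<in> {1..N} \<Longrightarrow>
                      norm (vel i t - vel k t) \<le> K * exp (- \<beta> * t)"
    and separated: "\<And>t i k. T \<le> t \<Longrightarrow> i \<in> C \<Longrightarrow> k \<in> {1..N} - C \<Longrightarrow> \<delta> \<le> norm (q i t - q k t)"
begin

definition \<Lambda> :: "real \<Rightarrow> real" where
  "\<Lambda> t = q_var C t powr (- \<alpha> / 2)"

definition V :: "real \<Rightarrow> real" where
  "V t = q_var C t powr ((1 - \<alpha>) / 2)"

definition A :: real where
  "A = \<kappa> * real (card C) * m / real N"

definition B :: real where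
  "B = 2 * (real (card C))\<^sup>2 * \<kappa> * \<delta> powr (- \<alpha>) * K"

definition \<gamma> :: real where
  "\<gamma> = (\<alpha> - 1) * (real (card C))\<^sup>2 * M"

lemma finite_C: "finite C"
  using C finite_subset by blast

lemma A_pos: "0 < A"
proof -
  have "0 < card C" using C_nontrivial finite_C card_gt_0_iff by blast
  then show ?thesis unfolding A_def using kappa m N by simp
qed

lemma B_nonneg: "0 \<le> B"
  unfolding B_def using kappa K by simp

lemma \<gamma>_nonneg: "0 \<le> \<gamma>"
  unfolding \<gamma>_def using alpha m m_le_M by simp

lemma q_var_pos: "0 \<le> t \<Longrightarrow> 0 < q_var C t"
proof -
  assume t: "0 \<le> t"
  obtain i j where ij: "i \<in> C" "j \<in> C" "i \<noteq> j" using C_nontrivial by blast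
  then have "q i t \<noteq> q j t" using C q_noncollision[OF t] by blast
  then have "0 < norm (q i t - q j t)" by simp
  also have "\<dots> \<le> sqrt (q_var C t)" using finite_C ij(1,2) by (rule norm_q_diff_le_sqrt_q_var)
  finally show ?thesis by simp
qed

lemma \<Lambda>_nonneg: "0 \<le> \<Lambda> t"
  unfolding \<Lambda>_def by simp

lemma \<Lambda>_le_psi:
  assumes t: "0 \<le> t" and ik: "i \<in> C" "k \<in> C" "i \<noteq> k"
  shows "\<Lambda> t \<le> psi_sing \<alpha> (norm (q k t - q i t))"
proof -
  have "q k t \<noteq> q i t" using C q_noncollision[OF t] ik by blast
  then have "0 < norm (q k t - q i t)" by simp
  moreover have "norm (q k t - q i t) \<le> sqrt (q_var C t)"
    using finite_C ik by (intro norm_q_diff_le_sqrt_q_var)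
  ultimately have "psi_sing \<alpha> (sqrt (q_var C t)) \<le> psi_sing \<alpha> (norm (q k t - q i t))"
    using alpha by (intro psi_sing_antimono) auto
  moreover have "psi_sing \<alpha> (sqrt (q_var C t)) = \<Lambda> t"
    unfolding psi_sing_def \<Lambda>_def using q_var_pos[OF t] by (simp add: powr_half_sqrt[symmetric] powr_powr)
  ultimately show ?thesis by simp
qed

lemma \<Lambda>_continuous_on:
  assumes "0 < a"
  shows "continuous_on {a..b} \<Lambda>"
proof (intro continuous_at_imp_continuous_on ballI)
  fix x assume "x \<in> {a..b}"
  then have x: "0 < x" using assms by auto
  have "((\<lambda>x. q_var C x powr (- \<alpha> / 2)) has_real_derivative
          (- \<alpha> / 2) * q_var C x powr (- \<alpha> / 2 - of_nat 1) *
          (\<Sum>i\<in>C. \<Sum>j\<in>C. 2 * inner (q i x - q j x) (vel i x - vel j x))) (at x)"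
    by (rule DERIV_fun_powr[OF q_var_has_derivative[OF C x] q_var_pos]) (use x in simp_all)
  then show "isCont \<Lambda> x" unfolding \<Lambda>_def[abs_def] by (rule DERIV_isCont)
qed

lemma q_var_deriv_abs_le:
  assumes t: "0 < t"
  shows "\<bar>\<Sum>i\<in>C. \<Sum>j\<in>C. 2 * inner (q i t - q j t) (vel i t - vel j t)\<bar>
         \<le> 2 * (real (card C))\<^sup>2 * M * sqrt (q_var C t) * sqrt (p_var C t)"
proof -
  have "\<bar>\<Sum>i\<in>C. \<Sum>j\<in>C. 2 * inner (q i t - q j t) (vel i t - vel j t)\<bar>
      \<le> (\<Sum>i\<in>C. \<Sum>j\<in>C. \<bar>2 * inner (q i t - q j t) (vel i t - vel j t)\<bar>)"
    by (rule order_trans[OF sum_abs sum_mono]) (rule sum_abs)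
  also have "\<dots> \<le> (\<Sum>i\<in>C. \<Sum>j\<in>C. 2 * (sqrt (q_var C t) * (M * sqrt (p_var C t))))"
  proof (intro sum_mono)
    fix i j assume ij: "i \<in> C" "j \<in> C"
    have "norm (vel i t - vel j t) \<le> M * norm (p i t - p j t)"
      using ij C t by (intro vel_lipschitz) auto
    also have "\<dots> \<le> M * sqrt (p_var C t)"
      using m m_le_M finite_C ij by (intro mult_left_mono norm_p_diff_le_sqrt_p_var) auto
    finally have "norm (q i t - q j t) * norm (vel i t - vel j t) \<le> sqrt (q_var C t) * (M * sqrt (p_var C t))"
      using finite_C ij by (intro mult_mono norm_q_diff_le_sqrt_q_var) (auto simp: q_var_nonneg)
    then show "\<bar>2 * inner (q i t - q j t) (vel i t - vel j t)\<bar> \<le> 2 * (sqrt (q_var C t) * (M * sqrt (p_var C t)))"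
      using Cauchy_Schwarz_ineq2[of "q i t - q j t" "vel i t - vel j t"] by (simp add: abs_mult)
  qed
  also have "\<dots> = 2 * (real (card C))\<^sup>2 * M * sqrt (q_var C t) * sqrt (p_var C t)"
    by (simp add: power2_eq_square algebra_simps)
  finally show ?thesis .
qed

lemma V_deriv_le:
  assumes t: "0 < t"
  obtains V' where "(V has_real_derivative V') (at t)" "V' \<le> \<gamma> * \<Lambda> t * sqrt (p_var C t)"
proof
  let ?Q' = "\<Sum>i\<in>C. \<Sum>j\<in>C. 2 * inner (q i t - q j t) (vel i t - vel j t)"
  let ?e = "(1 - \<alpha>) / 2"
  have Q: "0 < q_var C t" using q_var_pos t by simp
  show "(V has_real_derivative ?e * q_var C t powr (?e - 1) * ?Q') (at t)"
    unfolding V_def[abs_def]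
    using DERIV_fun_powr[OF q_var_has_derivative[OF C t] Q, of ?e] by simp
  have P: "0 \<le> q_var C t powr (?e - 1)" by simp
  have "?e * ?Q' = ((\<alpha> - 1) / 2) * (- ?Q')"
    by (simp add: field_simps)
  also have "\<dots> \<le> ((\<alpha> - 1) / 2) * \<bar>?Q'\<bar>"
    using alpha by (intro mult_left_mono) auto
  finally have "q_var C t powr (?e - 1) * (?e * ?Q') \<le> q_var C t powr (?e - 1) * (((\<alpha> - 1) / 2) * \<bar>?Q'\<bar>)"
    using P by (rule mult_left_mono)
  then have "?e * q_var C t powr (?e - 1) * ?Q' \<le> ((\<alpha> - 1) / 2) * q_var C t powr (?e - 1) * \<bar>?Q'\<bar>"
    by (simp only: ac_simps)
  also have "\<dots> \<le> ((\<alpha> - 1) / 2) * q_var C t powr (?e - 1) *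
          (2 * (real (card C))\<^sup>2 * M * sqrt (q_var C t) * sqrt (p_var C t))"
    using alpha P q_var_deriv_abs_le[OF t] by (intro mult_left_mono) auto
  also have "q_var C t powr (?e - 1) * sqrt (q_var C t) = \<Lambda> t"
  proof -
    have "sqrt (q_var C t) = q_var C t powr (1/2)" using Q by (simp add: powr_half_sqrt)
    then have "q_var C t powr (?e - 1) * sqrt (q_var C t) = q_var C t powr (?e - 1 + 1/2)"
      using Q by (simp only: powr_add)
    also have "?e - 1 + 1/2 = - \<alpha> / 2" by (simp add: field_simps)
    finally show ?thesis unfolding \<Lambda>_def .
  qed
  then have "((\<alpha> - 1) / 2) * q_var C t powr (?e - 1) *
          (2 * (real (card C))\<^sup>2 * M * sqrt (q_var C t) * sqrt (p_var C t))
        = \<gamma> * \<Lambda> t * sqrt (p_var C t)"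
  proof -
    have reorder: "(a / 2) * b * (2 * c * d * e * f) = a * c * d * (b * e) * f" for a b c d e f :: real
      by simp
    show ?thesis
      unfolding \<gamma>_def reorder \<open>q_var C t powr (?e - 1) * sqrt (q_var C t) = \<Lambda> t\<close> ..
  qed
  finally show "?e * q_var C t powr (?e - 1) * ?Q' \<le> \<gamma> * \<Lambda> t * sqrt (p_var C t)" .
qed

lemma ext_force_le:
  assumes t: "T \<le> t" and i: "i \<in> C"
  shows "norm (ext_force C i t) \<le> \<kappa> * \<delta> powr (- \<alpha>) * K * exp (- \<beta> * t)"
proof -
  have "norm (ext_force C i t)
      = (\<kappa> / real N) * norm (\<Sum>k\<in>{1..N} - C. psi_sing \<alpha> (norm (q k t - q i t)) *\<^sub>R (vel k t - vel i t))"
    unfolding ext_force_def using kappa by simp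
  also have "\<dots> \<le> (\<kappa> / real N) * (\<Sum>k\<in>{1..N} - C. norm (psi_sing \<alpha> (norm (q k t - q i t)) *\<^sub>R (vel k t - vel i t)))"
    using kappa by (intro mult_left_mono norm_sum) auto
  also have "\<dots> \<le> (\<kappa> / real N) * (\<Sum>k\<in>{1..N} - C. \<delta> powr (- \<alpha>) * (K * exp (- \<beta> * t)))"
  proof (intro mult_left_mono sum_mono)
    fix k assume k: "k \<in> {1..N} - C"
    have "\<delta> \<le> norm (q k t - q i t)"
      using separated[OF t i k] by (simp add: norm_minus_commute)
    then have "psi_sing \<alpha> (norm (q k t - q i t)) \<le> \<delta> powr (- \<alpha>)"
      using psi_sing_antimono[of \<alpha> \<delta>] \<delta> alpha by (simp add: psi_sing_def)
    moreover have "norm (vel k t - vel i t) \<le> K * exp (- \<beta> * t)"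
      using t i k C by (intro vel_decay) auto
    ultimately show "norm (psi_sing \<alpha> (norm (q k t - q i t)) *\<^sub>R (vel k t - vel i t))
        \<le> \<delta> powr (- \<alpha>) * (K * exp (- \<beta> * t))"
      unfolding psi_sing_def by (auto intro!: mult_mono)
  qed (use kappa in simp)
  also have "\<dots> = (\<kappa> / real N) * real (card ({1..N} - C)) * (\<delta> powr (- \<alpha>) * (K * exp (- \<beta> * t)))"
    by simp
  also have "\<dots> \<le> \<kappa> * (\<delta> powr (- \<alpha>) * (K * exp (- \<beta> * t)))"
  proof -
    have "real (card ({1..N} - C)) \<le> real N"
      using card_mono[of "{1..N}" "{1..N} - C"] by auto
    then have "(\<kappa> / real N) * real (card ({1..N} - C)) \<le> \<kappa>"
      using kappa N by (simp add: field_simps)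
    then show ?thesis using K by (intro mult_right_mono) auto
  qed
  finally show ?thesis by (simp add: mult.assoc)
qed

lemma p_var_deriv_le_cluster:
  assumes t: "T \<le> t"
  shows "(\<Sum>i\<in>C. \<Sum>j\<in>C. 2 * inner (p i t - p j t) (force i t - force j t))
     \<le> - 2 * A * \<Lambda> t * p_var C t + 2 * B * exp (- \<beta> * t) * sqrt (p_var C t)"
proof -
  have "(\<Sum>i\<in>C. \<Sum>j\<in>C. 2 * inner (p i t - p j t) (force i t - force j t))
     \<le> - (2 * \<kappa> * real (card C) * m / real N) * \<Lambda> t * p_var C t
       + 4 * (real (card C))\<^sup>2 * (\<kappa> * \<delta> powr (- \<alpha>) * K * exp (- \<beta> * t)) * sqrt (p_var C t)"
    using T t by (intro p_var_deriv_le C \<Lambda>_nonneg \<Lambda>_le_psi ext_force_le) auto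
  also have "\<dots> = - 2 * A * \<Lambda> t * p_var C t + 2 * B * exp (- \<beta> * t) * sqrt (p_var C t)"
    unfolding A_def B_def by (simp add: algebra_simps)
  finally show ?thesis .
qed

text \<open>The square root of \<open>p_var C\<close> need not be differentiable where \<open>p_var C\<close> vanishes,
  so it is regularised by \<open>\<epsilon>\<^sup>2\<close>; the price is the term \<open>A * \<Lambda> s * \<epsilon>\<close>.\<close>
lemma sqrt_p_var_reg_deriv_le:
  assumes s: "T \<le> s" and \<epsilon>: "0 < \<epsilon>"
  obtains W' where "((\<lambda>s. sqrt (p_var C s + \<epsilon>\<^sup>2)) has_real_derivative W') (at s)"
    "W' \<le> - A * \<Lambda> s * (sqrt (p_var C s) - \<epsilon>) + B * exp (- \<beta> * s)"
proof -
  let ?X' = "\<Sum>i\<in>C. \<Sum>j\<in>C. 2 * inner (p i s - p j s) (force i s - force j s)"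
  define X W where "X = p_var C s" and "W = sqrt (X + \<epsilon>\<^sup>2)"
  have X: "0 \<le> X" unfolding X_def by (rule p_var_nonneg)
  have W: "0 < W" unfolding W_def using \<epsilon> X by (simp add: add_nonneg_pos)
  have "((\<lambda>s. sqrt (p_var C s + \<epsilon>\<^sup>2)) has_real_derivative inverse (sqrt (p_var C s + \<epsilon>\<^sup>2)) / 2 * (?X' + 0)) (at s)"
    using T s X \<epsilon> unfolding X_def
    by (intro DERIV_chain2[OF DERIV_real_sqrt] DERIV_add p_var_has_derivative C DERIV_const)
       (auto simp: add_nonneg_pos)
  then have deriv: "((\<lambda>s. sqrt (p_var C s + \<epsilon>\<^sup>2)) has_real_derivative ?X' / (2 * W)) (at s)"
    by (simp add: W_def X_def field_simps)
  have "?X' / (2 * W) \<le> (- 2 * A * \<Lambda> s * X + 2 * B * exp (- \<beta> * s) * sqrt X) / (2 * W)"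
    using p_var_deriv_le_cluster[OF s] W unfolding X_def by (intro divide_right_mono) auto
  also have "\<dots> = - (A * \<Lambda> s) * (X / W) + (B * exp (- \<beta> * s)) * (sqrt X / W)"
    using W by (simp add: field_simps)
  also have "\<dots> \<le> - (A * \<Lambda> s) * (sqrt X - \<epsilon>) + (B * exp (- \<beta> * s)) * 1"
  proof -
    have "(A * \<Lambda> s) * (sqrt X - \<epsilon>) \<le> (A * \<Lambda> s) * (X / W)"
      using A_pos \<Lambda>_nonneg[of s] sqrt_minus_le_div_sqrt_add_power2[OF X \<epsilon>]
      unfolding W_def by (intro mult_left_mono) auto
    moreover have "(B * exp (- \<beta> * s)) * (sqrt X / W) \<le> (B * exp (- \<beta> * s)) * 1"
      using B_nonneg W unfolding W_def by (intro mult_left_mono) (auto intro: real_sqrt_le_mono)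
    ultimately show ?thesis unfolding mult_minus_left by linarith
  qed
  finally show ?thesis using deriv that unfolding X_def by simp
qed

text \<open>In the Lyapunov functional \<open>V + (\<gamma> / A) * sqrt (p_var C)\<close> the dissipation of the
  second term cancels the growth of \<open>V\<close>; what remains is the regularisation error and the
  integrable forcing \<open>B * exp (- \<beta> * s)\<close> from the other agents.\<close>
lemma V_sqrt_p_var_reg_deriv_le:
  assumes s: "T \<le> s" and \<epsilon>: "0 < \<epsilon>"
  obtains H' where "((\<lambda>s. V s + (\<gamma> / A) * sqrt (p_var C s + \<epsilon>\<^sup>2)) has_real_derivative H') (at s)"
    "H' \<le> \<gamma> * \<epsilon> * \<Lambda> s + (\<gamma> * B / A) * exp (- \<beta> * s)"
proof -
  obtain V' where V': "(V has_real_derivative V') (at s)" "V' \<le> \<gamma> * \<Lambda> s * sqrt (p_var C s)"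
    using V_deriv_le[of s] T s by force
  obtain W' where W': "((\<lambda>s. sqrt (p_var C s + \<epsilon>\<^sup>2)) has_real_derivative W') (at s)"
    "W' \<le> - A * \<Lambda> s * (sqrt (p_var C s) - \<epsilon>) + B * exp (- \<beta> * s)"
    using sqrt_p_var_reg_deriv_le[OF s \<epsilon>] by blast
  have "(\<gamma> / A) * W' \<le> (\<gamma> / A) * (- A * \<Lambda> s * (sqrt (p_var C s) - \<epsilon>) + B * exp (- \<beta> * s))"
    using W'(2) \<gamma>_nonneg A_pos by (intro mult_left_mono) auto
  also have "\<dots> = - \<gamma> * \<Lambda> s * sqrt (p_var C s) + \<gamma> * \<epsilon> * \<Lambda> s + (\<gamma> * B / A) * exp (- \<beta> * s)"
    using A_pos by (simp add: field_simps)
  finally have "V' + (\<gamma> / A) * W' \<le> \<gamma> * \<epsilon> * \<Lambda> s + (\<gamma> * B / A) * exp (- \<beta> * s)"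
    using V'(2) by linarith
  moreover have "((\<lambda>s. V s + (\<gamma> / A) * sqrt (p_var C s + \<epsilon>\<^sup>2)) has_real_derivative V' + (\<gamma> / A) * W') (at s)"
    using V'(1) W'(1) by (intro DERIV_add DERIV_cmult)
  ultimately show ?thesis using that by blast
qed

lemma V_le_eps:
  assumes t: "T \<le> t" and \<epsilon>: "0 < \<epsilon>" and L: "\<And>s. T \<le> s \<Longrightarrow> s \<le> t \<Longrightarrow> \<Lambda> s \<le> L"
  shows "V t \<le> V T + (\<gamma> / A) * (sqrt (p_var C T) + \<epsilon>) + \<gamma> * B / (A * \<beta>) + \<gamma> * \<epsilon> * L * (t - T)"
proof -
  define c where "c = \<gamma> * B / (A * \<beta>)"
  define W where "W s = sqrt (p_var C s + \<epsilon>\<^sup>2)" for s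
  define H where "H s = V s + (\<gamma> / A) * W s + c * exp (- \<beta> * s) - \<gamma> * \<epsilon> * L * s" for s
  have \<gamma>A: "0 \<le> \<gamma> / A" using \<gamma>_nonneg A_pos by simp
  have c: "0 \<le> c" unfolding c_def using \<gamma>_nonneg B_nonneg A_pos \<beta> by simp
  have "H t \<le> H T"
  proof (rule DERIV_nonpos_imp_nonincreasing[OF t])
    fix s assume s: "T \<le> s" "s \<le> t"
    obtain H' where H': "((\<lambda>s. V s + (\<gamma> / A) * W s) has_real_derivative H') (at s)"
      "H' \<le> \<gamma> * \<epsilon> * \<Lambda> s + (\<gamma> * B / A) * exp (- \<beta> * s)"
      using V_sqrt_p_var_reg_deriv_le[OF s(1) \<epsilon>] unfolding W_def by blast
    have "(H has_real_derivative H' + c * (exp (- \<beta> * s) * (- \<beta>)) - \<gamma> * \<epsilon> * L) (at s)"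
      unfolding H_def[abs_def] by (intro DERIV_diff DERIV_add H'(1)) (auto intro!: derivative_eq_intros)
    moreover have "c * (exp (- \<beta> * s) * (- \<beta>)) = - (\<gamma> * B / A) * exp (- \<beta> * s)"
      unfolding c_def using \<beta> A_pos by (simp add: field_simps)
    moreover have "\<gamma> * \<epsilon> * \<Lambda> s \<le> \<gamma> * \<epsilon> * L"
      using L[OF s] \<gamma>_nonneg \<epsilon> by (intro mult_left_mono) auto
    ultimately show "\<exists>y. (H has_real_derivative y) (at s) \<and> y \<le> 0"
      using H'(2) by (intro exI conjI) (assumption, linarith)
  qed
  then have "V t \<le> V T + (\<gamma> / A) * W T + c * exp (- \<beta> * T) + \<gamma> * \<epsilon> * L * (t - T)
               - (\<gamma> / A) * W t - c * exp (- \<beta> * t)"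
    unfolding H_def by (simp add: algebra_simps)
  moreover have "(\<gamma> / A) * W T \<le> (\<gamma> / A) * (sqrt (p_var C T) + \<epsilon>)"
    unfolding W_def using \<gamma>A \<epsilon> p_var_nonneg by (intro mult_left_mono sqrt_add_power2_le) auto
  moreover have "c * exp (- \<beta> * T) \<le> c" using \<beta> T c by (simp add: mult_left_le)
  moreover have "0 \<le> (\<gamma> / A) * W t"
    using \<gamma>A p_var_nonneg[of C t] unfolding W_def by (intro mult_nonneg_nonneg) auto
  moreover have "0 \<le> c * exp (- \<beta> * t)" using c by simp
  ultimately show ?thesis unfolding c_def by linarith
qed

lemma V_le:
  assumes t: "T \<le> t"
  shows "V t \<le> V T + (\<gamma> / A) * sqrt (p_var C T) + \<gamma> * B / (A * \<beta>)"
proof -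
  obtain s0 where s0: "s0 \<in> {T..t}" "\<And>s. s \<in> {T..t} \<Longrightarrow> \<Lambda> s \<le> \<Lambda> s0"
    using continuous_attains_sup[OF compact_Icc _ \<Lambda>_continuous_on[OF T]] t by fastforce
  define Z where "Z = \<gamma> / A + \<gamma> * \<Lambda> s0 * (t - T)"
  have Z: "0 \<le> Z" unfolding Z_def using \<gamma>_nonneg A_pos \<Lambda>_nonneg[of s0] t by simp
  show ?thesis
  proof (rule field_le_epsilon)
    fix e :: real assume e: "0 < e"
    define \<epsilon> where "\<epsilon> = e / (Z + 1)"
    have \<epsilon>: "0 < \<epsilon>" unfolding \<epsilon>_def using e Z by simp
    have "V t \<le> V T + (\<gamma> / A) * (sqrt (p_var C T) + \<epsilon>) + \<gamma> * B / (A * \<beta>) + \<gamma> * \<epsilon> * \<Lambda> s0 * (t - T)"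
      using s0 by (intro V_le_eps[OF t \<epsilon>]) auto
    also have "\<dots> = V T + (\<gamma> / A) * sqrt (p_var C T) + \<gamma> * B / (A * \<beta>) + \<epsilon> * Z"
      unfolding Z_def by (simp add: algebra_simps add_divide_distrib)
    also have "\<epsilon> * Z \<le> e"
      using Z e unfolding \<epsilon>_def by (simp add: field_simps)
    finally show "V t \<le> V T + (\<gamma> / A) * sqrt (p_var C T) + \<gamma> * B / (A * \<beta>) + e" by simp
  qed
qed

lemma q_var_lower_bound: "\<exists>c>0. \<forall>t\<ge>T. c \<le> q_var C t"
proof -
  define V\<^sub>0 where "V\<^sub>0 = V T + (\<gamma> / A) * sqrt (p_var C T) + \<gamma> * B / (A * \<beta>)"
  have "0 < V T" unfolding V_def using q_var_pos[of T] T by simp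
  then have V\<^sub>0: "0 < V\<^sub>0" unfolding V\<^sub>0_def using \<gamma>_nonneg A_pos B_nonneg \<beta> p_var_nonneg[of C T]
    by (intro add_pos_nonneg mult_nonneg_nonneg divide_nonneg_nonneg) auto
  define ex where "ex = 2 / (1 - \<alpha>)"
  have ex: "ex \<le> 0" unfolding ex_def using alpha by (simp add: divide_nonpos_neg)
  have "V\<^sub>0 powr ex \<le> q_var C t" if t: "T \<le> t" for t
  proof -
    have Q: "0 < q_var C t" using q_var_pos t T by simp
    then have "0 < V t" unfolding V_def by simp
    then have "V\<^sub>0 powr ex \<le> V t powr ex"
      using V_le[OF t] ex unfolding V\<^sub>0_def by (intro powr_mono2') auto
    also have "V t powr ex = q_var C t powr ((1 - \<alpha>) / 2 * ex)"
      unfolding V_def by (simp add: powr_powr)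
    also have "(1 - \<alpha>) / 2 * ex = 1"
      unfolding ex_def using alpha by simp
    also have "q_var C t powr 1 = q_var C t"
      using Q by simp
    finally show ?thesis .
  qed
  moreover have "0 < V\<^sub>0 powr ex" using V\<^sub>0 by simp
  ultimately show ?thesis by blast
qed

end

context cs_flocking
begin

lemma no_collapse:
  assumes i0: "i0 \<in> {1..N}" and j0: "j0 \<in> {1..N}" "i0 \<noteq> j0"
  shows "\<not> ((\<lambda>t. q i0 t - q j0 t) \<longlongrightarrow> 0) at_top"
proof
  assume collapse: "((\<lambda>t. q i0 t - q j0 t) \<longlongrightarrow> 0) at_top"
  define C where "C = {k \<in> {1..N}. ((\<lambda>t. q i0 t - q k t) \<longlongrightarrow> 0) at_top}"
  have C: "C \<subseteq> {1..N}" unfolding C_def by auto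
  then have fin: "finite C" using finite_subset by blast
  have "i0 \<in> C" "j0 \<in> C" unfolding C_def using i0 j0 collapse by simp_all
  then have nontrivial: "\<exists>i\<in>C. \<exists>j\<in>C. i \<noteq> j" using j0(2) by blast
  have collapse_C: "((\<lambda>t. q i t - q k t) \<longlongrightarrow> 0) at_top" if "i \<in> C" "k \<in> C" for i k
  proof -
    have "((\<lambda>t. (q i0 t - q k t) - (q i0 t - q i t)) \<longlongrightarrow> 0 - 0) at_top"
      using that unfolding C_def by (intro tendsto_diff) auto
    then show ?thesis by simp
  qed
  have "\<exists>\<delta>>0. \<forall>x\<in>C \<times> ({1..N} - C). eventually (\<lambda>t. \<delta> \<le> norm (q (fst x) t - q (snd x) t)) at_top"
  proof (rule finite_ball_ex_pos_lower)
    fix x assume x: "x \<in> C \<times> ({1..N} - C)"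
    then obtain i k where ik: "x = (i, k)" "i \<in> C" "k \<in> {1..N}" "k \<notin> C" by auto
    have "\<not> ((\<lambda>t. q i t - q k t) \<longlongrightarrow> 0) at_top"
    proof
      assume "((\<lambda>t. q i t - q k t) \<longlongrightarrow> 0) at_top"
      then have "((\<lambda>t. (q i0 t - q i t) + (q i t - q k t)) \<longlongrightarrow> 0 + 0) at_top"
        using ik(2) unfolding C_def by (intro tendsto_add) auto
      then show False using ik(3,4) unfolding C_def by simp
    qed
    then show "\<exists>\<delta>>0. eventually (\<lambda>t. \<delta> \<le> norm (q (fst x) t - q (snd x) t)) at_top"
      using rel_pos_tendsto_0_or_separated[of i k] ik C by auto
  qed (use fin in \<open>auto elim: eventually_mono\<close>)
  then obtain \<delta> where \<delta>: "0 < \<delta>"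
    and ev: "\<forall>x\<in>C \<times> ({1..N} - C). eventually (\<lambda>t. \<delta> \<le> norm (q (fst x) t - q (snd x) t)) at_top"
    by blast
  have "eventually (\<lambda>t. \<forall>x\<in>C \<times> ({1..N} - C). \<delta> \<le> norm (q (fst x) t - q (snd x) t)) at_top"
    using fin by (intro eventually_ball_finite ev) simp
  then obtain T0 where T0: "\<And>t i k. T0 \<le> t \<Longrightarrow> i \<in> C \<Longrightarrow> k \<in> {1..N} - C \<Longrightarrow> \<delta> \<le> norm (q i t - q k t)"
    unfolding eventually_at_top_linorder by fastforce
  obtain K \<beta> where K: "0 \<le> K" "0 < \<beta>"
    and decay: "\<And>t i k. 1 \<le> t \<Longrightarrow> i \<in> {1..N} \<Longrightarrow> k \<in> {1..N} \<Longrightarrow> norm (vel i t - vel k t) \<le> K * exp (- \<beta> * t)"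
    using vel_diff_exp_decay by metis
  interpret cluster: cs_cluster N \<kappa> \<alpha> g q p R m M D C \<delta> "max T0 1" K \<beta>
    by unfold_locales (use C nontrivial \<delta> K decay T0 in auto)
  obtain c where c: "0 < c" "\<And>t. max T0 1 \<le> t \<Longrightarrow> c \<le> q_var C t"
    using cluster.q_var_lower_bound by blast
  have "((\<lambda>t. \<Sum>i\<in>C. \<Sum>j\<in>C. (norm (q i t - q j t))\<^sup>2) \<longlongrightarrow> (\<Sum>i\<in>C. \<Sum>j\<in>C. 0\<^sup>2)) at_top"
    using collapse_C by (intro tendsto_sum tendsto_power) (simp add: tendsto_norm_zero_iff)
  then have "(q_var C \<longlongrightarrow> 0) at_top" unfolding q_var_def[abs_def] by simp
  then have "eventually (\<lambda>t. q_var C t < c) at_top" using c(1) by (rule order_tendstoD(2))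
  moreover have "eventually (\<lambda>t. max T0 1 \<le> t) at_top" by (rule eventually_ge_at_top)
  ultimately have "eventually (\<lambda>t. q_var C t < c \<and> max T0 1 \<le> t) at_top"
    by (rule eventually_conj)
  then obtain t0 where "\<And>t. t0 \<le> t \<Longrightarrow> q_var C t < c \<and> max T0 1 \<le> t"
    unfolding eventually_at_top_linorder by blast
  then show False using c(2)[of t0] by force
qed

lemma uniform_separation:
  "\<exists>c>0. \<forall>t\<ge>0. \<forall>i\<in>{1..N}. \<forall>j\<in>{1..N}. i \<noteq> j \<longrightarrow> c \<le> norm (q i t - q j t)"
proof -
  let ?pairs = "{x \<in> {1..N} \<times> {1..N}. fst x \<noteq> snd x}"
  have "\<exists>c>0. \<forall>x\<in>?pairs. \<forall>t\<ge>0. c \<le> norm (q (fst x) t - q (snd x) t)"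
  proof (rule finite_ball_ex_pos_lower)
    fix x assume "x \<in> ?pairs"
    then obtain i j where ij: "x = (i, j)" "i \<in> {1..N}" "j \<in> {1..N}" "i \<noteq> j" by auto
    then obtain \<delta> where "0 < \<delta>" "eventually (\<lambda>t. \<delta> \<le> norm (q i t - q j t)) at_top"
      using rel_pos_tendsto_0_or_separated[of i j] no_collapse[of i j] by blast
    moreover have "continuous_on {0..} (\<lambda>t. norm (q i t - q j t))"
      using ij by (intro continuous_on_norm continuous_on_diff q_continuous)
    moreover have "0 < norm (q i t - q j t)" if "0 \<le> t" for t
      using q_noncollision[OF that] ij by simp
    ultimately show "\<exists>c>0. \<forall>t\<ge>0. c \<le> norm (q (fst x) t - q (snd x) t)"
      unfolding ij(1) by (intro uniform_pos_of_eventually_ge) auto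
  qed auto
  then show ?thesis by fastforce
qed

end

theorem theorem4p1:
  fixes N :: nat and \<kappa> \<alpha> :: real and g g' :: "real \<Rightarrow> real"
    and q p :: "nat \<Rightarrow> real \<Rightarrow> real ^ 'd"
  assumes N: "N \<ge> 1" and kappa: "\<kappa> > 0"
    and g_deriv: "\<And>x. x \<ge> 0 \<Longrightarrow> (g has_real_derivative g' x) (at x within {0..})"
    and g'_cont: "continuous_on {0..} g'"
    and g0: "g 0 = 0"
    and g'_bounds: "\<And>R. R \<ge> 0 \<Longrightarrow> \<exists>m M. 0 < m \<and> (\<forall>x\<in>{0..R}. m \<le> g' x \<and> g' x \<le> M)"
    and g_cvx: "convex_on {0<..} g \<or> concave_on {0<..} g"
    and alpha: "\<alpha> \<ge> 1" "\<alpha> \<noteq> 1"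
    and sol: "cs_global_solution N \<kappa> g (psi_sing \<alpha>) q p"
    and noncoll0: "\<And>i j. i \<in> {1..N} \<Longrightarrow> j \<in> {1..N} \<Longrightarrow> i \<noteq> j \<Longrightarrow> q i 0 \<noteq> q j 0"
    and flock_q: "\<exists>D. \<forall>t\<ge>0. \<forall>i\<in>{1..N}. \<forall>j\<in>{1..N}. norm (q i t - q j t) \<le> D"
    and flock_p: "((\<lambda>t. Max {norm (p i t - p j t) | i j. i \<in> {1..N} \<and> j \<in> {1..N}}) \<longlongrightarrow> 0) at_top"
  shows "\<exists>c>0. \<forall>t\<ge>0. \<forall>i\<in>{1..N}. \<forall>j\<in>{1..N}. i \<noteq> j \<longrightarrow> c \<le> norm (q i t - q j t)"
proof -
  interpret cs_solution N \<kappa> g "psi_sing \<alpha>" q p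
    using sol by unfold_locales
  obtain R where R: "\<And>i t. i \<in> {1..N} \<Longrightarrow> 0 \<le> t \<Longrightarrow> norm (p i t) \<le> R"
    using p_bounded[OF N flock_p] by blast
  obtain D where D: "\<And>i j t. i \<in> {1..N} \<Longrightarrow> j \<in> {1..N} \<Longrightarrow> 0 \<le> t \<Longrightarrow> norm (q i t - q j t) \<le> D"
    using flock_q by blast
  have "0 \<le> max R 1" by simp
  then obtain m M where m: "0 < m" and g'_mM: "\<And>x. x \<in> {0..max R 1} \<Longrightarrow> m \<le> g' x \<and> g' x \<le> M"
    using g'_bounds by blast
  interpret cs_flocking N \<kappa> \<alpha> g q p "max R 1" m M "max D 1"
  proof unfold_locales
    show "m * (b - a) \<le> g b - g a \<and> g b - g a \<le> M * (b - a)"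
      if "0 \<le> a" "a \<le> b" "b \<le> max R 1" for a b
      using increment_bounds_of_deriv_bounds[OF g_deriv g'_mM that] .
    show "norm (p i t) \<le> max R 1" if "i \<in> {1..N}" "0 \<le> t" for i t
      using R[OF that] by simp
    show "norm (q i t - q j t) \<le> max D 1" if "i \<in> {1..N}" "j \<in> {1..N}" "0 \<le> t" for i j t
      using D[OF that] by simp
  qed (use N kappa alpha g0 m in auto)
  show ?thesis by (rule uniform_separation)
qed

end
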